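(* If a formula $\varphi$ is satisfiable in a Bochvar-Kripke model, then it is satisfiable in a Bochvar-Kripke model $(W,R,v)$ with $W$ finite.
   Context: Formulas are built from a countably infinite set of propositional variables and the constants $0,1$ using the unary connectives $\neg$, $J_2$, $\Box$ and the binary connective $\vee$. Let $\mathbf{WK}^e$ be the algebra on $\{0,\tfrac12,1\}$ with $\neg0=1$, $\neg1=0$, $\neg\tfrac12=\tfrac12$; $a\vee b=\tfrac12$ if $a=\tfrac12$ or $b=\tfrac12$, otherwise $a\vee b=\max(a,b)$; $J_2(1)=1$, $J_2(\tfrac12)=J_2(0)=0$. A Bochvar-Kripke model is a triple $(W,R,v)$ with $W\neq\emptyset$, $R\subseteq W\times W$, $v:W\times\mathrm{Fm}\to\{0,\tfrac12,1\}$ such that for each $w$, $v(w,\cdot)$ commutes with $\neg,\vee,J_2,0,1$ as computed in $\mathbf{WK}^e$, and: $v(w,\Box\varphi)=\tfrac12$ iff $v(w,\varphi)=\tfrac12$; $v(w,\Box\varphi)=1$ iff $v(w,\varphi)\neq\tfrac12$ and $v(s,\varphi)=1$ for all $s$ with $wRs$; $v(w,\Box\varphi)=0$ iff $v(w,\varphi)\neq\tfrac12$ and $v(s,\varphi)\neq1$ for some $s$ with $wRs$. A formula $\varphi$ is satisfiable in a model $(W,R,v)$ if $v(w,\varphi)=1$ for some $w\in W$. *)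

theory Defs
  imports Main
begin

datatype tv = Zero | Half | One

datatype fm = Var nat | Bot | Top | Neg fm | Disj fm fm | J2 fm | Box fm

fun wk_neg :: "tv \<Rightarrow> tv" where
  "wk_neg Zero = One" | "wk_neg One = Zero" | "wk_neg Half = Half"

definition wk_disj :: "tv \<Rightarrow> tv \<Rightarrow> tv" where
  "wk_disj a b = (if a = Half \<or> b = Half then Half
                  else if a = One \<or> b = One then One else Zero)"

fun wk_J2 :: "tv \<Rightarrow> tv" where
  "wk_J2 One = One" | "wk_J2 Half = Zero" | "wk_J2 Zero = Zero"

definition bk_model :: "'w set \<Rightarrow> ('w \<times> 'w) set \<Rightarrow> ('w \<Rightarrow> fm \<Rightarrow> tv) \<Rightarrow> bool" where
  "bk_model W R v \<longleftrightarrow> W \<noteq> {} \<and> R \<subseteq> W \<times> W \<and>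
    (\<forall>w\<in>W.
      v w Bot = Zero \<and> v w Top = One \<and>
      (\<forall>\<phi>. v w (Neg \<phi>) = wk_neg (v w \<phi>)) \<and>
      (\<forall>\<phi> \<psi>. v w (Disj \<phi> \<psi>) = wk_disj (v w \<phi>) (v w \<psi>)) \<and>
      (\<forall>\<phi>. v w (J2 \<phi>) = wk_J2 (v w \<phi>)) \<and>
      (\<forall>\<phi>. (v w (Box \<phi>) = Half \<longleftrightarrow> v w \<phi> = Half) \<and>
            (v w (Box \<phi>) = One \<longleftrightarrow> v w \<phi> \<noteq> Half \<and> (\<forall>s. (w, s) \<in> R \<longrightarrow> v s \<phi> = One)) \<and>
            (v w (Box \<phi>) = Zero \<longleftrightarrow> v w \<phi> \<noteq> Half \<and> (\<exists>s. (w, s) \<in> R \<and> v s \<phi> \<noteq> One))))"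

definition satisfiable_in :: "fm \<Rightarrow> 'w set \<Rightarrow> ('w \<times> 'w) set \<Rightarrow> ('w \<Rightarrow> fm \<Rightarrow> tv) \<Rightarrow> bool" where
  "satisfiable_in \<phi> W R v \<longleftrightarrow> (\<exists>w\<in>W. v w \<phi> = One)"

end

theory Submission
  imports Defs "HOL-Library.FuncSet"
begin

text \<open>Filtration through the subformulas of \<open>\<phi>\<close>: identify worlds that give the same value to
every subformula of \<open>\<phi>\<close>, and relate two classes whenever some of their members are related.
A world is represented by its type, the restriction of its valuation to the subformulas, so
there are at most \<open>3\<^sup>n\<close> worlds for \<open>n\<close> subformulas. Because the value of \<open>\<box>\<psi>\<close> at a world is
part of its type, the Kripke clause for \<open>\<box>\<close> survives the identification, and every subformula
keeps its value.\<close>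

fun bk_eval :: "('w \<times> 'w) set \<Rightarrow> ('w \<Rightarrow> nat \<Rightarrow> tv) \<Rightarrow> 'w \<Rightarrow> fm \<Rightarrow> tv" where
  "bk_eval R V w (Var k) = V w k"
| "bk_eval R V w Bot = Zero"
| "bk_eval R V w Top = One"
| "bk_eval R V w (Neg \<psi>) = wk_neg (bk_eval R V w \<psi>)"
| "bk_eval R V w (Disj \<psi> \<chi>) = wk_disj (bk_eval R V w \<psi>) (bk_eval R V w \<chi>)"
| "bk_eval R V w (J2 \<psi>) = wk_J2 (bk_eval R V w \<psi>)"
| "bk_eval R V w (Box \<psi>) =
    (if bk_eval R V w \<psi> = Half then Half
     else if \<forall>s. (w, s) \<in> R \<longrightarrow> bk_eval R V s \<psi> = One then One else Zero)"

lemma bk_modelI: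
  assumes "W \<noteq> {}" and "R \<subseteq> W \<times> W"
    and "\<And>w \<psi> \<chi>. w \<in> W \<Longrightarrow>
      v w Bot = Zero \<and> v w Top = One \<and>
      v w (Neg \<psi>) = wk_neg (v w \<psi>) \<and>
      v w (Disj \<psi> \<chi>) = wk_disj (v w \<psi>) (v w \<chi>) \<and>
      v w (J2 \<psi>) = wk_J2 (v w \<psi>) \<and>
      v w (Box \<psi>) =
        (if v w \<psi> = Half then Half
         else if \<forall>s. (w, s) \<in> R \<longrightarrow> v s \<psi> = One then One else Zero)"
  shows "bk_model W R v"
  using assms unfolding bk_model_def by auto

lemma bk_model_bk_eval:
  assumes "W \<noteq> {}" and "R \<subseteq> W \<times> W"
  shows "bk_model W R (bk_eval R V)"
  using assms by (intro bk_modelI) simp_all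

lemma bk_model_simps:
  assumes "bk_model W R v" and "w \<in> W"
  shows "v w Bot = Zero" and "v w Top = One"
    and "v w (Neg \<psi>) = wk_neg (v w \<psi>)"
    and "v w (Disj \<psi> \<chi>) = wk_disj (v w \<psi>) (v w \<chi>)"
    and "v w (J2 \<psi>) = wk_J2 (v w \<psi>)"
    and "v w (Box \<psi>) =
      (if v w \<psi> = Half then Half
       else if \<forall>s. (w, s) \<in> R \<longrightarrow> v s \<psi> = One then One else Zero)"
  using assms unfolding bk_model_def by (auto split: if_splits)

fun subformulas :: "fm \<Rightarrow> fm set" where
  "subformulas (Var k) = {Var k}"
| "subformulas Bot = {Bot}"
| "subformulas Top = {Top}"
| "subformulas (Neg \<psi>) = insert (Neg \<psi>) (subformulas \<psi>)"
| "subformulas (Disj \<psi> \<chi>) = insert (Disj \<psi> \<chi>) (subformulas \<psi> \<union> subformulas \<chi>)"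
| "subformulas (J2 \<psi>) = insert (J2 \<psi>) (subformulas \<psi>)"
| "subformulas (Box \<psi>) = insert (Box \<psi>) (subformulas \<psi>)"

lemma finite_subformulas: "finite (subformulas \<phi>)"
  by (induction \<phi>) auto

lemma finite_UNIV_tv: "finite (UNIV :: tv set)"
proof -
  have "(UNIV :: tv set) = {Zero, Half, One}"
    using tv.exhaust by auto
  then show ?thesis
    by (metis finite.emptyI finite_insert)
qed

definition filtration_rel ::
    "fm set \<Rightarrow> ('w \<Rightarrow> fm \<Rightarrow> tv) \<Rightarrow> ('w \<times> 'w) set \<Rightarrow> ((fm \<Rightarrow> tv) \<times> (fm \<Rightarrow> tv)) set" where
  "filtration_rel \<Sigma> v R = {(restrict (v w) \<Sigma>, restrict (v u) \<Sigma>) | w u. (w, u) \<in> R}"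

lemma bk_eval_filtration:
  assumes model: "bk_model W R v" and "subformulas \<psi> \<subseteq> \<Sigma>" and "w \<in> W"
  shows "bk_eval (filtration_rel \<Sigma> v R) (\<lambda>t k. t (Var k)) (restrict (v w) \<Sigma>) \<psi> = v w \<psi>"
  using assms(2,3)
proof (induction \<psi> arbitrary: w)
  case (Box \<psi>)
  let ?R' = "filtration_rel \<Sigma> v R"
  let ?eval = "bk_eval ?R' (\<lambda>t k. t (Var k))"
  have "subformulas \<psi> \<subseteq> \<Sigma>" and "Box \<psi> \<in> \<Sigma>"
    using Box.prems(1) by auto
  note IH = Box.IH[OF this(1)]
  have R_W: "(x, y) \<in> R \<Longrightarrow> x \<in> W \<and> y \<in> W" for x y
    using model unfolding bk_model_def by auto
  have succ_One: "(\<forall>t. (restrict (v w) \<Sigma>, t) \<in> ?R' \<longrightarrow> ?eval t \<psi> = One)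
      \<longleftrightarrow> (\<forall>s. (w, s) \<in> R \<longrightarrow> v s \<psi> = One)" if "v w \<psi> \<noteq> Half"
  proof
    assume all_One: "\<forall>t. (restrict (v w) \<Sigma>, t) \<in> ?R' \<longrightarrow> ?eval t \<psi> = One"
    show "\<forall>s. (w, s) \<in> R \<longrightarrow> v s \<psi> = One"
    proof (intro allI impI)
      fix s
      assume edge: "(w, s) \<in> R"
      then have "(restrict (v w) \<Sigma>, restrict (v s) \<Sigma>) \<in> ?R'"
        unfolding filtration_rel_def by blast
      then have "?eval (restrict (v s) \<Sigma>) \<psi> = One"
        using all_One by blast
      then show "v s \<psi> = One"
        using IH edge R_W by simp
    qed
  next
    assume w_One: "\<forall>s. (w, s) \<in> R \<longrightarrow> v s \<psi> = One"
    show "\<forall>t. (restrict (v w) \<Sigma>, t) \<in> ?R' \<longrightarrow> ?eval t \<psi> = One"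
    proof (intro allI impI)
      fix t
      assume "(restrict (v w) \<Sigma>, t) \<in> ?R'"
      then obtain w' u where edge: "(w', u) \<in> R" and t: "t = restrict (v u) \<Sigma>"
        and same_type: "restrict (v w') \<Sigma> = restrict (v w) \<Sigma>"
        unfolding filtration_rel_def by auto
      have "v w' (Box \<psi>) = v w (Box \<psi>)"
        using same_type \<open>Box \<psi> \<in> \<Sigma>\<close> by (metis restrict_apply')
      also have "\<dots> = One"
        using bk_model_simps(6)[OF model Box.prems(2)] that w_One by simp
      finally have "v u \<psi> = One"
        using bk_model_simps(6)[OF model, of w'] edge R_W by (simp split: if_splits)
      then show "?eval t \<psi> = One"
        using IH t edge R_W by metis
    qed
  qed
  show ?case
    using IH[OF Box.prems(2)] succ_One bk_model_simps(6)[OF model Box.prems(2)]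
    by (simp del: restrict_apply)
qed (simp_all add: bk_model_simps[OF model])

lemma satisfiable_filtration:
  assumes "bk_model W R v" and "satisfiable_in \<phi> W R v"
  shows "\<exists>(W' :: (fm \<Rightarrow> tv) set) R' v'. finite W' \<and> bk_model W' R' v' \<and> satisfiable_in \<phi> W' R' v'"
proof -
  define \<Sigma> where "\<Sigma> = subformulas \<phi>"
  define W' where "W' = (\<lambda>w. restrict (v w) \<Sigma>) ` W"
  define R' where "R' = filtration_rel \<Sigma> v R"
  define v' where "v' = bk_eval R' (\<lambda>t k. t (Var k))"
  have "W' \<subseteq> (\<Pi>\<^sub>E \<psi>\<in>\<Sigma>. UNIV)"
    unfolding W'_def by auto
  moreover have "finite (\<Pi>\<^sub>E \<psi>\<in>\<Sigma>. (UNIV :: tv set))"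
    by (simp add: finite_PiE \<Sigma>_def finite_subformulas finite_UNIV_tv)
  ultimately have "finite W'"
    by (rule finite_subset)
  moreover have "bk_model W' R' v'"
    unfolding v'_def
  proof (rule bk_model_bk_eval)
    have "W \<noteq> {}" and "R \<subseteq> W \<times> W"
      using assms(1) unfolding bk_model_def by auto
    then show "W' \<noteq> {}" and "R' \<subseteq> W' \<times> W'"
      unfolding W'_def R'_def filtration_rel_def by auto
  qed
  moreover have "satisfiable_in \<phi> W' R' v'"
    using assms(2) bk_eval_filtration[OF assms(1), of \<phi> \<Sigma>]
    unfolding satisfiable_in_def W'_def R'_def v'_def \<Sigma>_def by fastforce
  ultimately show ?thesis by blast
qed

lemma bk_model_inj_image:
  assumes inj: "inj_on f W" and model: "bk_model W R v"
  shows "bk_model (f ` W) (map_prod f f ` R) (\<lambda>x. v (inv_into W f x))"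
proof -
  have "W \<noteq> {}" and R_W: "R \<subseteq> W \<times> W"
    using model unfolding bk_model_def by auto
  have succ_One: "(\<forall>t. (f w, t) \<in> map_prod f f ` R \<longrightarrow> v (inv_into W f t) \<psi> = One)
      \<longleftrightarrow> (\<forall>s. (w, s) \<in> R \<longrightarrow> v s \<psi> = One)" if "w \<in> W" for w \<psi>
  proof -
    have "(f w, t) \<in> map_prod f f ` R \<longleftrightarrow> (\<exists>s. (w, s) \<in> R \<and> t = f s)" for t
      using inj R_W that by (force simp: inj_on_eq_iff)
    moreover have "s \<in> W" if "(w, s) \<in> R" for s
      using R_W that by blast
    ultimately show ?thesis
      using inj by (auto simp: inv_into_f_f)
  qed
  let ?v' = "\<lambda>x. v (inv_into W f x)"
  show ?thesis
  proof (rule bk_modelI)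
    show "f ` W \<noteq> {}" and "map_prod f f ` R \<subseteq> f ` W \<times> f ` W"
      using \<open>W \<noteq> {}\<close> R_W by auto
  next
    fix x \<psi> \<chi>
    assume "x \<in> f ` W"
    then obtain w where "w \<in> W" and "x = f w"
      by blast
    then show "?v' x Bot = Zero \<and> ?v' x Top = One \<and>
      ?v' x (Neg \<psi>) = wk_neg (?v' x \<psi>) \<and>
      ?v' x (Disj \<psi> \<chi>) = wk_disj (?v' x \<psi>) (?v' x \<chi>) \<and>
      ?v' x (J2 \<psi>) = wk_J2 (?v' x \<psi>) \<and>
      ?v' x (Box \<psi>) =
        (if ?v' x \<psi> = Half then Half
         else if \<forall>t. (x, t) \<in> map_prod f f ` R \<longrightarrow> ?v' t \<psi> = One then One else Zero)"
      using succ_One bk_model_simps[OF model] inj by (simp add: inv_into_f_f)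
  qed
qed

lemma satisfiable_in_inj_image:
  assumes "inj_on f W" and "satisfiable_in \<phi> W R v"
  shows "satisfiable_in \<phi> (f ` W) R' (\<lambda>x. v (inv_into W f x))"
  using assms unfolding satisfiable_in_def by (auto simp: inv_into_f_f)

theorem mainTheorem6:
  fixes \<phi> :: fm and W :: "'w set" and R :: "('w \<times> 'w) set" and v :: "'w \<Rightarrow> fm \<Rightarrow> tv"
  assumes "bk_model W R v" and "satisfiable_in \<phi> W R v"
  shows "\<exists>(W' :: nat set) R' v'. finite W' \<and> bk_model W' R' v' \<and> satisfiable_in \<phi> W' R' v'"
proof -
  obtain W\<^sub>f :: "(fm \<Rightarrow> tv) set" and R\<^sub>f v\<^sub>f
    where "finite W\<^sub>f" and model: "bk_model W\<^sub>f R\<^sub>f v\<^sub>f" and sat: "satisfiable_in \<phi> W\<^sub>f R\<^sub>f v\<^sub>f"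
    using satisfiable_filtration[OF assms] by blast
  then obtain f :: "(fm \<Rightarrow> tv) \<Rightarrow> nat" where "inj_on f W\<^sub>f"
    using finite_imp_inj_to_nat_seg by blast
  then have "finite (f ` W\<^sub>f)"
    and "bk_model (f ` W\<^sub>f) (map_prod f f ` R\<^sub>f) (\<lambda>x. v\<^sub>f (inv_into W\<^sub>f f x))"
    and "satisfiable_in \<phi> (f ` W\<^sub>f) (map_prod f f ` R\<^sub>f) (\<lambda>x. v\<^sub>f (inv_into W\<^sub>f f x))"
    using \<open>finite W\<^sub>f\<close> bk_model_inj_image[OF _ model] satisfiable_in_inj_image[OF _ sat] by simp_all
  then show ?thesis
    by blast
qed

end
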